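(* Consider the controlled SI optimal control problem described in the context, with one control per node ($M=N$) and given (fixed) initial conditions. Let $(\boldsymbol i^*(t), \boldsymbol\lambda^*(t), \boldsymbol u^*(t))$, $t\in[0,T]$, be an optimal state trajectory, its associated adjoint trajectory, and optimal controls satisfying the Pontryagin Maximum Principle conditions listed in the context. Then $\lambda_j^*(t)\geq 0$ for all $1\leq j\leq N$ and all $t\in[0,T]$.
   Context: Let $N\geq 1$, and let $\boldsymbol A=(A_{jk})$ be an $N\times N$ symmetric matrix with entries in $\{0,1\}$ (adjacency matrix of an undirected, unweighted network on nodes $1,\dots,N$). Fix $\beta>0$, a horizon $T>0$, and initial values $x_{0j}\in[0,1]$. Each node $j$ has its own control $u_j(t)$. The state $i_j(t)\in[0,1]$ (probability node $j$ is informed), with $s_j(t)=1-i_j(t)$, evolves by $\dot i_j(t)=\beta s_j(t)\sum_{k=1}^N A_{jk}i_k(t)+u_j(t)s_j(t)$, $i_j(0)=x_{0j}$, $1\le j\le N$. The objective to be maximized is $J=\frac1N\sum_{j=1}^N i_j(T)-\sum_{j=1}^N\int_0^T g_j(u_j(t))\,dt$, where each $g_j:\mathbb R\to\mathbb R$ is differentiable, strictly convex, even, increasing on $[0,\infty)$, and satisfies $g_j(0)=0$ (so $g_j\ge 0$). The optimal controls are nonnegative: $u_j^*(t)\ge 0$. The Hamiltonian is $H(\boldsymbol i,\boldsymbol\lambda,\boldsymbol u)=-\sum_{j=1}^N g_j(u_j)+\sum_{l=1}^N\lambda_l\big(\beta s_l\sum_{k=1}^N A_{lk}i_k+u_l s_l\big)$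 with $s_l=1-i_l$. The Pontryagin conditions are: $\boldsymbol i^*$ solves the state equations above; the adjoint variables satisfy $\dot\lambda_j^*(t)=-\beta\sum_{l=1}^N\lambda_l^*(t)s_l^*(t)A_{lj}+\beta\lambda_j^*(t)\sum_{k=1}^N A_{jk}i_k^*(t)+\lambda_j^*(t)u_j^*(t)$ with $\lambda_j^*(T)=1/N$; and for each $t$, $\boldsymbol u^*(t)$ maximizes $H(\boldsymbol i^*(t),\boldsymbol\lambda^*(t),\cdot)$ over control values. *)

theory Defs
  imports "HOL-Analysis.Analysis"
begin

text \<open>Nodes are indexed by 1..N. Vectors over the nodes are functions nat => real
  (only the values at indices 1..N matter). A is the adjoint matrix A j k.\<close>

definition SI_hamiltonian ::
  "nat \<Rightarrow> (nat \<Rightarrow> nat \<Rightarrow> real) \<Rightarrow> real \<Rightarrow> (nat \<Rightarrow> real \<Rightarrow> real)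
   \<Rightarrow> (nat \<Rightarrow> real) \<Rightarrow> (nat \<Rightarrow> real) \<Rightarrow> (nat \<Rightarrow> real) \<Rightarrow> real" where
  "SI_hamiltonian N A \<beta> g i lam u =
     - (\<Sum>j=1..N. g j (u j))
     + (\<Sum>l=1..N. lam l * (\<beta> * (1 - i l) * (\<Sum>k=1..N. A l k * i k) + u l * (1 - i l)))"

end

theory Submission
  imports Defs
begin

text \<open>If some \<open>\<lambda>\<^sub>j\<close> became negative, maximality of the Hamiltonian would switch off
  the control \<open>u\<^sub>j\<close>, and the adjoint equation at the last time where some \<open>\<lambda>\<^sub>j\<close> touches
  zero would then make \<open>\<lambda>\<^sub>j\<close> decrease there, although \<open>\<lambda>\<^sub>j(T) = 1/N > 0\<close>. To make the
  "last touching time" argument strict, one compares with \<open>\<lambda>\<^sub>j + \<epsilon> e\<^sup>K\<^sup>(\<^sup>T\<^sup>-\<^sup>t\<^sup>)\<close>, where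
  \<open>K = \<beta>N + 1\<close> dominates the coupling through the other adjoint variables, and lets
  \<open>\<epsilon> \<rightarrow> 0\<close>.\<close>

lemma strictly_convex_mono_pos:
  fixes g :: "real \<Rightarrow> real"
  assumes convex: "\<forall>a b c. a \<noteq> b \<and> 0 < c \<and> c < 1 \<longrightarrow> g (c * a + (1 - c) * b) < c * g a + (1 - c) * g b"
    and mono: "mono_on {0..} g" and zero: "g 0 = 0" and x: "x > 0"
  shows "g x > 0"
proof -
  have "g (x / 2) < g x / 2"
    using convex[rule_format, of x 0 "1/2"] x zero by simp
  moreover have "g 0 \<le> g (x / 2)"
    using x by (intro mono_onD[OF mono]) auto
  ultimately show ?thesis using zero by linarith
qed

lemma sum_max_imp_component_max:
  fixes f :: "'a \<Rightarrow> 'b \<Rightarrow> real"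
  assumes "finite S" "j \<in> S" and max: "\<And>v. (\<Sum>l\<in>S. f l (v l)) \<le> (\<Sum>l\<in>S. f l (u l))"
  shows "f j x \<le> f j (u j)"
proof -
  have "(\<Sum>l\<in>S. f l ((u(j := x)) l)) = f j x + (\<Sum>l\<in>S - {j}. f l (u l))"
    using assms(1,2) by (simp add: sum.remove)
  moreover have "(\<Sum>l\<in>S. f l (u l)) = f j (u j) + (\<Sum>l\<in>S - {j}. f l (u l))"
    using assms(1,2) by (simp add: sum.remove)
  ultimately show ?thesis using max[of "u(j := x)"] by linarith
qed

lemma SI_hamiltonian_separable:
  "SI_hamiltonian N A \<beta> g i lam w =
     (\<Sum>l=1..N. lam l * (\<beta> * (1 - i l) * (\<Sum>k=1..N. A l k * i k) + w l * (1 - i l)) - g l (w l))"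
  unfolding SI_hamiltonian_def by (simp add: sum_subtractf)

lemma SI_hamiltonian_max_cost_le:
  assumes max: "\<And>v. SI_hamiltonian N A \<beta> g i lam v \<le> SI_hamiltonian N A \<beta> g i lam u"
    and j: "j \<in> {1..N}" and zero: "g j 0 = 0"
  shows "g j (u j) \<le> lam j * u j * (1 - i j)"
proof -
  define f where "f l x = lam l * (\<beta> * (1 - i l) * (\<Sum>k=1..N. A l k * i k) + x * (1 - i l)) - g l x"
    for l x
  have "\<And>v. (\<Sum>l=1..N. f l (v l)) \<le> (\<Sum>l=1..N. f l (u l))"
    using max by (simp add: SI_hamiltonian_separable f_def)
  from sum_max_imp_component_max[where f = f and x = 0, OF _ j this]
  have "f j 0 \<le> f j (u j)" by simp
  thus ?thesis using zero by (simp add: f_def algebra_simps)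
qed

lemma SI_hamiltonian_max_control_zero:
  assumes max: "\<And>v. SI_hamiltonian N A \<beta> g i lam v \<le> SI_hamiltonian N A \<beta> g i lam u"
    and j: "j \<in> {1..N}"
    and convex: "\<forall>a b c. a \<noteq> b \<and> 0 < c \<and> c < 1 \<longrightarrow>
                   g j (c * a + (1 - c) * b) < c * g j a + (1 - c) * g j b"
    and mono: "mono_on {0..} (g j)" and zero: "g j 0 = 0"
    and "u j \<ge> 0" "i j \<le> 1" "lam j < 0"
  shows "u j = 0"
proof (rule ccontr)
  assume "u j \<noteq> 0"
  with \<open>u j \<ge> 0\<close> have "g j (u j) > 0"
    using strictly_convex_mono_pos[OF convex mono zero] by simp
  moreover have "lam j * u j * (1 - i j) \<le> 0"
    using assms(6-8) by (simp add: mult_nonpos_nonneg)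
  moreover note SI_hamiltonian_max_cost_le[OF max j zero]
  ultimately show False by linarith
qed

lemma nonneg_if_pos_right:
  fixes w :: "real \<Rightarrow> real"
  assumes cont: "continuous (at s within {a..b}) w" and "a \<le> s" "s < b"
    and pos: "\<And>r. s < r \<Longrightarrow> r \<le> b \<Longrightarrow> w r > 0"
  shows "w s \<ge> 0"
proof -
  have "(w \<longlongrightarrow> w s) (at s within {a..b})"
    using cont by (simp add: continuous_within)
  hence "(w \<longlongrightarrow> w s) (at s within {s..b})"
    by (rule tendsto_within_subset) (use \<open>a \<le> s\<close> in auto)
  hence "(w \<longlongrightarrow> w s) (at_right s)"
    using at_within_Icc_at_right[OF \<open>s < b\<close>] by simp
  moreover have "eventually (\<lambda>r. 0 \<le> w r) (at_right s)"
    unfolding eventually_at_right[OF \<open>s < b\<close>]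
    using pos \<open>s < b\<close> by (intro exI[of _ b]) (auto simp: less_imp_le)
  ultimately show ?thesis by (rule tendsto_lowerbound) simp
qed

lemma backward_barrier_pos:
  fixes w w' :: "'j \<Rightarrow> real \<Rightarrow> real"
  assumes J: "finite J"
    and deriv: "\<And>j t. j \<in> J \<Longrightarrow> t \<in> {a..b} \<Longrightarrow> (w j has_real_derivative w' j t) (at t within {a..b})"
    and final: "\<And>j. j \<in> J \<Longrightarrow> w j b > 0"
    and barrier: "\<And>j s. j \<in> J \<Longrightarrow> s \<in> {a..<b} \<Longrightarrow> w j s \<le> 0 \<Longrightarrow> (\<forall>l\<in>J. w l s \<ge> 0) \<Longrightarrow> w' j s < 0"
  shows "\<forall>j\<in>J. \<forall>t\<in>{a..b}. w j t > 0"
proof (rule ccontr)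
  define S where "S = (\<Union>j\<in>J. {t \<in> {a..b}. w j t \<le> 0})"
  have cont: "continuous (at t within {a..b}) (w j)" if "j \<in> J" "t \<in> {a..b}" for j t
    using deriv[OF that] by (rule DERIV_continuous)
  have "closed S"
    unfolding S_def using J cont
    by (intro closed_UN ballI continuous_on_closed_Collect_le)
       (auto simp: continuous_on_eq_continuous_within intro: continuous_on_const)
  moreover assume "\<not> ?thesis"
  hence "S \<noteq> {}" unfolding S_def by force
  moreover have bdd: "bdd_above S" unfolding S_def by (rule bdd_aboveI[of _ b]) auto
  ultimately have "Sup S \<in> S" by (rule closed_contains_Sup[rotated -1])
  then obtain j s where j: "j \<in> J" and s: "s \<in> {a..b}" "w j s \<le> 0" and s_def: "s = Sup S"
    unfolding S_def by blast
  have after: "w l r > 0" if "l \<in> J" "s < r" "r \<le> b" for l r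
  proof (rule ccontr)
    assume "\<not> w l r > 0"
    with that s have "r \<in> S" unfolding S_def by (auto simp: not_less)
    hence "r \<le> s" using bdd unfolding s_def by (rule cSup_upper)
    with \<open>s < r\<close> show False by simp
  qed
  have "s < b"
    using s final[OF j] by (cases "s = b") auto
  have "\<forall>l\<in>J. w l s \<ge> 0"
    using nonneg_if_pos_right[OF cont _ \<open>s < b\<close> after] s(1) by auto
  hence "w' j s < 0"
    using barrier[OF j _ \<open>w j s \<le> 0\<close>] s \<open>s < b\<close> by auto
  then obtain d where "d > 0"
    and decr: "\<forall>h>0. s + h \<in> {a..b} \<longrightarrow> h < d \<longrightarrow> w j s > w j (s + h)"
    using has_real_derivative_neg_dec_right[OF deriv[OF j s(1)]] by blast
  define h where "h = min (d / 2) ((b - s) / 2)"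
  have "h > 0" "h < d" "s + h \<in> {a..b}"
    using \<open>d > 0\<close> \<open>s < b\<close> s unfolding h_def by (auto simp: min_def field_simps)
  with decr \<open>w j s \<le> 0\<close> after[OF j, of "s + h"] show False by force
qed

lemma backward_nonneg_of_barrier:
  fixes v v' :: "'j \<Rightarrow> real \<Rightarrow> real" and K :: real
  assumes J: "finite J"
    and deriv: "\<And>j t. j \<in> J \<Longrightarrow> t \<in> {a..b} \<Longrightarrow> (v j has_real_derivative v' j t) (at t within {a..b})"
    and final: "\<And>j. j \<in> J \<Longrightarrow> v j b > 0"
    and barrier: "\<And>j s c. j \<in> J \<Longrightarrow> s \<in> {a..<b} \<Longrightarrow> c > 0 \<Longrightarrow> v j s \<le> - c \<Longrightarrow>
                    (\<forall>l\<in>J. - v l s \<le> c) \<Longrightarrow> v' j s < K * c"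
  shows "\<forall>j\<in>J. \<forall>t\<in>{a..b}. v j t \<ge> 0"
proof (intro ballI)
  fix j t assume j: "j \<in> J" and t: "t \<in> {a..b}"
  define E where "E = (\<lambda>\<tau>. exp (K * (b - \<tau>)))"
  have E_pos: "E \<tau> > 0" for \<tau> by (simp add: E_def)
  have perturbed_pos: "v j t + \<epsilon> * E t > 0" if "\<epsilon> > 0" for \<epsilon>
  proof -
    have "\<forall>l\<in>J. \<forall>\<tau>\<in>{a..b}. v l \<tau> + \<epsilon> * E \<tau> > 0"
    proof (rule backward_barrier_pos[where w = "\<lambda>l \<tau>. v l \<tau> + \<epsilon> * E \<tau>"
          and w' = "\<lambda>l \<tau>. v' l \<tau> - K * (\<epsilon> * E \<tau>)", OF J])
      fix l \<tau> assume l: "l \<in> J" and \<tau>: "\<tau> \<in> {a..b}"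
      have "((\<lambda>\<tau>. \<epsilon> * E \<tau>) has_real_derivative - K * (\<epsilon> * E \<tau>)) (at \<tau> within {a..b})"
        unfolding E_def by (auto intro!: derivative_eq_intros)
      from DERIV_add[OF deriv[OF l \<tau>] this]
      show "((\<lambda>\<tau>. v l \<tau> + \<epsilon> * E \<tau>) has_real_derivative v' l \<tau> - K * (\<epsilon> * E \<tau>))
          (at \<tau> within {a..b})" by simp
    next
      fix l assume "l \<in> J"
      thus "v l b + \<epsilon> * E b > 0" using final \<open>\<epsilon> > 0\<close> by (simp add: E_def add_pos_pos)
    next
      fix l s assume "l \<in> J" "s \<in> {a..<b}" "v l s + \<epsilon> * E s \<le> 0"
        and "\<forall>m\<in>J. v m s + \<epsilon> * E s \<ge> 0"
      moreover have "\<epsilon> * E s > 0" using \<open>\<epsilon> > 0\<close> E_pos by simp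
      ultimately have "v' l s < K * (\<epsilon> * E s)"
        by (intro barrier) (auto simp: add.commute neg_le_iff_le minus_le_iff)
      thus "v' l s - K * (\<epsilon> * E s) < 0" by simp
    qed
    thus ?thesis using j t by simp
  qed
  have "0 \<le> v j t + \<delta>" if "\<delta> > 0" for \<delta>
    using perturbed_pos[of "\<delta> / E t"] that E_pos[of t] by simp
  thus "v j t \<ge> 0" by (rule field_le_epsilon[where x = 0, simplified])
qed

lemma SI_adjoint_rhs_le:
  fixes lam i :: "nat \<Rightarrow> real"
  assumes "\<beta> \<ge> 0" "lam j \<le> 0" "c \<ge> 0"
    and A: "\<forall>l\<in>{1..N}. A l j = 0 \<or> A l j = 1" "\<forall>k\<in>{1..N}. A j k = 0 \<or> A j k = 1"
    and i: "\<forall>l\<in>{1..N}. 0 \<le> i l \<and> i l \<le> 1"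
    and lam: "\<forall>l\<in>{1..N}. - lam l \<le> c"
  shows "- \<beta> * (\<Sum>l=1..N. lam l * (1 - i l) * A l j) + \<beta> * lam j * (\<Sum>k=1..N. A j k * i k)
         \<le> \<beta> * (real N * c)"
proof -
  have term_le: "- lam l * ((1 - i l) * A l j) \<le> c" if l: "l \<in> {1..N}" for l
  proof -
    have "0 \<le> i l" "i l \<le> 1" "A l j = 0 \<or> A l j = 1"
      using i A(1) l by auto
    hence x: "0 \<le> (1 - i l) * A l j" "(1 - i l) * A l j \<le> 1"
      by auto
    show ?thesis
    proof (cases "lam l \<le> 0")
      case True
      hence "- lam l * ((1 - i l) * A l j) \<le> - lam l"
        using mult_left_mono_neg[OF x(2) True] by simp
      thus ?thesis using bspec[OF lam l] by linarith
    next
      case False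
      hence "0 \<le> lam l * ((1 - i l) * A l j)" using x(1) by simp
      thus ?thesis using \<open>c \<ge> 0\<close> by linarith
    qed
  qed
  have "- (\<Sum>l=1..N. lam l * (1 - i l) * A l j) \<le> real N * c"
    using sum_mono[of "{1..N}" "\<lambda>l. - lam l * ((1 - i l) * A l j)" "\<lambda>_. c"] term_le
    by (simp add: sum_negf mult.assoc)
  hence "\<beta> * - (\<Sum>l=1..N. lam l * (1 - i l) * A l j) \<le> \<beta> * (real N * c)"
    using \<open>\<beta> \<ge> 0\<close> by (rule mult_left_mono)
  moreover have "0 \<le> A j k * i k" if k: "k \<in> {1..N}" for k
  proof -
    have "A j k = 0 \<or> A j k = 1" "0 \<le> i k" using A(2) i k by auto
    thus ?thesis by auto
  qed
  hence "\<beta> * (lam j * (\<Sum>k=1..N. A j k * i k)) \<le> 0"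
    using \<open>lam j \<le> 0\<close> \<open>\<beta> \<ge> 0\<close> by (intro mult_nonneg_nonpos mult_nonpos_nonneg sum_nonneg) auto
  ultimately show ?thesis by (simp add: mult.assoc)
qed

theorem lemma1:
  fixes N :: nat and A :: "nat \<Rightarrow> nat \<Rightarrow> real" and \<beta> T :: real
    and x0 :: "nat \<Rightarrow> real" and g :: "nat \<Rightarrow> real \<Rightarrow> real"
    and i lam u :: "real \<Rightarrow> nat \<Rightarrow> real"
  assumes N_pos: "N \<ge> 1"
    and A_01: "\<forall>j\<in>{1..N}. \<forall>k\<in>{1..N}. A j k = 0 \<or> A j k = 1"
    and A_sym: "\<forall>j\<in>{1..N}. \<forall>k\<in>{1..N}. A j k = A k j"
    and beta_pos: "\<beta> > 0" and T_pos: "T > 0"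
    and x0_range: "\<forall>j\<in>{1..N}. 0 \<le> x0 j \<and> x0 j \<le> 1"
    and g_diff: "\<forall>j\<in>{1..N}. \<forall>v. g j differentiable (at v)"
    and g_convex: "\<forall>j\<in>{1..N}. \<forall>a b (c::real). a \<noteq> b \<and> 0 < c \<and> c < 1 \<longrightarrow>
                     g j (c * a + (1 - c) * b) < c * g j a + (1 - c) * g j b"
    and g_even: "\<forall>j\<in>{1..N}. \<forall>v. g j (- v) = g j v"
    and g_incr: "\<forall>j\<in>{1..N}. mono_on {0..} (g j)"
    and g_zero: "\<forall>j\<in>{1..N}. g j 0 = 0"
    and i_range: "\<forall>t\<in>{0..T}. \<forall>j\<in>{1..N}. 0 \<le> i t j \<and> i t j \<le> 1"
    and u_nonneg: "\<forall>t\<in>{0..T}. \<forall>j\<in>{1..N}. u t j \<ge> 0"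
    and state_eq: "\<forall>t\<in>{0..T}. \<forall>j\<in>{1..N}.
        ((\<lambda>\<tau>. i \<tau> j) has_real_derivative
           (\<beta> * (1 - i t j) * (\<Sum>k=1..N. A j k * i t k) + u t j * (1 - i t j)))
        (at t within {0..T})"
    and state_init: "\<forall>j\<in>{1..N}. i 0 j = x0 j"
    and adjoint_eq: "\<forall>t\<in>{0..T}. \<forall>j\<in>{1..N}.
        ((\<lambda>\<tau>. lam \<tau> j) has_real_derivative
           (- \<beta> * (\<Sum>l=1..N. lam t l * (1 - i t l) * A l j)
            + \<beta> * lam t j * (\<Sum>k=1..N. A j k * i t k) + lam t j * u t j))
        (at t within {0..T})"
    and adjoint_final: "\<forall>j\<in>{1..N}. lam T j = 1 / real N"
    and maximality: "\<forall>t\<in>{0..T}. \<forall>v :: nat \<Rightarrow> real.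
        SI_hamiltonian N A \<beta> g (i t) (lam t) v \<le> SI_hamiltonian N A \<beta> g (i t) (lam t) (u t)"
  shows "\<forall>t\<in>{0..T}. \<forall>j\<in>{1..N}. lam t j \<ge> 0"
proof -
  have "\<forall>j\<in>{1..N}. \<forall>t\<in>{0..T}. lam t j \<ge> 0"
  proof (rule backward_nonneg_of_barrier[where v = "\<lambda>j t. lam t j" and K = "\<beta> * real N + 1"])
    fix j t assume "j \<in> {1..N}" "t \<in> {0..T}"
    with adjoint_eq show "((\<lambda>t. lam t j) has_real_derivative
        - \<beta> * (\<Sum>l=1..N. lam t l * (1 - i t l) * A l j)
        + \<beta> * lam t j * (\<Sum>k=1..N. A j k * i t k) + lam t j * u t j) (at t within {0..T})"
      by blast
  next
    fix j assume "j \<in> {1..N}"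
    thus "lam T j > 0" using adjoint_final N_pos by simp
  next
    fix j s c assume j: "j \<in> {1..N}" and "s \<in> {0..<T}" "c > 0" "lam s j \<le> - c"
      and lam_ge: "\<forall>l\<in>{1..N}. - lam s l \<le> c"
    hence s: "s \<in> {0..T}" and lam_neg: "lam s j < 0" by auto
    have "0 \<le> u s j" "i s j \<le> 1" using u_nonneg i_range s j by auto
    from SI_hamiltonian_max_control_zero[OF maximality[rule_format, OF s] j
        bspec[OF g_convex j] bspec[OF g_incr j] bspec[OF g_zero j] this lam_neg]
    have "u s j = 0" .
    have A: "\<forall>l\<in>{1..N}. A l j = 0 \<or> A l j = 1" "\<forall>k\<in>{1..N}. A j k = 0 \<or> A j k = 1"
      using A_01 j by blast+
    from SI_adjoint_rhs_le[OF _ _ _ A bspec[OF i_range s] lam_ge]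
    have "- \<beta> * (\<Sum>l=1..N. lam s l * (1 - i s l) * A l j)
        + \<beta> * lam s j * (\<Sum>k=1..N. A j k * i s k) \<le> \<beta> * (real N * c)"
      using beta_pos lam_neg \<open>c > 0\<close> by (meson less_imp_le)
    thus "- \<beta> * (\<Sum>l=1..N. lam s l * (1 - i s l) * A l j)
        + \<beta> * lam s j * (\<Sum>k=1..N. A j k * i s k) + lam s j * u s j < (\<beta> * real N + 1) * c"
      using \<open>u s j = 0\<close> \<open>c > 0\<close> by (simp add: algebra_simps)
  qed simp
  thus ?thesis by blast
qed

end
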